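(* There is a numerical constant $c>0$ such that for every even integer $n\ge 2$ and every $\alpha>0$: if $(\sigma_0,\dots,\sigma_{n-1})$ is a uniformly random permutation of the vector consisting of $n/2$ entries equal to $1$ and $n/2$ entries equal to $-1$, then \[ \mathbb{E}\left[\left(\sum_{i=0}^{n-1}\sigma_i(1-\alpha)^i\right)^2\right]\;\ge\;c\cdot\min\left\{1+\frac1\alpha,\ n^3\alpha^2\right\}. \] *)

theory Defs
  imports "HOL-Combinatorics.Permutations" Complex_Main
begin

definition balanced_vec :: "nat \<Rightarrow> nat \<Rightarrow> real" where
  "balanced_vec n j = (if j < n div 2 then 1 else -1)"

definition perm_expect :: "nat \<Rightarrow> ((nat \<Rightarrow> nat) \<Rightarrow> real) \<Rightarrow> real" where
  "perm_expect n g =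
     (\<Sum>p\<in>{p. p permutes {..<n}}. g p) / real (card {p. p permutes {..<n}})"

end

theory Submission
  imports Defs
begin

text \<open>
  Write \<open>w\<^sub>i = (1 - \<alpha>)^i\<close>. The entries of the balanced vector are exchangeable with sum 0, so
  the second moment of \<open>\<Sum> \<sigma>\<^sub>i w\<^sub>i\<close> is \<open>(n \<Sum> w\<^sub>i\<^sup>2 - (\<Sum> w\<^sub>i)\<^sup>2) / (n - 1)\<close>, at least the spread
  \<open>\<Sum> (w\<^sub>i - m)\<^sup>2\<close> of the weights around their mean m. For \<open>\<alpha> \<ge> 1\<close> the pair \<open>w\<^sub>0, w\<^sub>1\<close> alone makes
  the spread large. Otherwise pairing \<open>w\<^sub>i\<close> with \<open>w\<^sub>i\<^sub>+\<^sub>k\<close>, \<open>k = n/2\<close>, bounds the spread below by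
  \<open>(1 - y)\<^sup>3 / (4\<alpha>)\<close> with \<open>y = (1 - \<alpha>)^k\<close>, and Bernoulli's inequality gives
  \<open>1 - y \<ge> k\<alpha> / (1 + k\<alpha>)\<close>; the regimes \<open>k\<alpha> \<ge> 1\<close> and \<open>k\<alpha> < 1\<close> give the two terms of the minimum.
\<close>

lemma balanced_vec_square: "balanced_vec n j * balanced_vec n j = 1"
  by (simp add: balanced_vec_def)

lemma sum_balanced_vec:
  assumes "even n"
  shows "(\<Sum>j<n. balanced_vec n j) = 0"
proof -
  obtain k where k: "n = 2 * k" using assms by blast
  have "(\<Sum>j<n. balanced_vec n j) = (\<Sum>j\<in>{0..<k}. balanced_vec n j) + (\<Sum>j\<in>{k..<2*k}. balanced_vec n j)"
    using k by (simp add: sum.atLeastLessThan_concat lessThan_atLeast0)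
  also have "\<dots> = (\<Sum>j\<in>{0..<k}. 1) + (\<Sum>j\<in>{k..<2*k}. -1)"
    by (intro arg_cong2[where f = "(+)"] sum.cong) (auto simp: balanced_vec_def k)
  finally show ?thesis by simp
qed

lemma sum_balanced_vec_permuted:
  assumes "p permutes {..<n}" and "even n"
  shows "(\<Sum>j<n. balanced_vec n (p j)) = 0"
  using sum.reindex_bij_betw[OF permutes_imp_bij[OF assms(1)], of "balanced_vec n"]
    sum_balanced_vec[OF assms(2)]
  by simp

definition perm_correlation :: "nat \<Rightarrow> nat \<Rightarrow> nat \<Rightarrow> real" where
  "perm_correlation n i j =
     (\<Sum>p\<in>{p. p permutes {..<n}}. balanced_vec n (p i) * balanced_vec n (p j))"

lemma perm_correlation_diag: "perm_correlation n i i = fact n"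
  by (simp add: perm_correlation_def balanced_vec_square card_permutations)

lemma perm_correlation_offdiag_eq:
  assumes "j < n" "l < n" "j \<noteq> i" "l \<noteq> i"
  shows "perm_correlation n i l = perm_correlation n i j"
proof -
  let ?t = "Transposition.transpose j l"
  have "?t permutes {..<n}"
    using assms by (simp add: permutes_swap_id)
  moreover have "?t i = i" "?t l = j"
    using assms by auto
  ultimately show ?thesis
    unfolding perm_correlation_def
    by (subst sum_permutations_compose_right[of ?t]) auto
qed

text \<open>All \<open>n - 1\<close> off-diagonal correlations in a row agree, and the row sums to \<open>-n!\<close>
  because each permuted vector sums to 0.\<close>
lemma perm_correlation_offdiag:
  assumes "i < n" "j < n" "j \<noteq> i" "even n"
  shows "perm_correlation n i j = - fact n / (real n - 1)"
proof -
  let ?P = "{p. p permutes {..<n}}" and ?R = "{..<n} - {i}"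
  have "n \<ge> 2" using assms by linarith
  have "(\<Sum>l\<in>?R. perm_correlation n i l) = (\<Sum>l\<in>?R. perm_correlation n i j)"
    by (rule sum.cong) (auto intro!: perm_correlation_offdiag_eq assms)
  also have "\<dots> = (real n - 1) * perm_correlation n i j"
    using assms by (simp add: of_nat_diff)
  finally have row_const: "(\<Sum>l\<in>?R. perm_correlation n i l) = (real n - 1) * perm_correlation n i j" .
  have "(\<Sum>l\<in>?R. perm_correlation n i l) = (\<Sum>p\<in>?P. balanced_vec n (p i) * (\<Sum>l\<in>?R. balanced_vec n (p l)))"
    unfolding perm_correlation_def sum_distrib_left by (rule sum.swap)
  also have "\<dots> = (\<Sum>p\<in>?P. -1)"
  proof (rule sum.cong)
    fix p assume "p \<in> ?P"
    then have "(\<Sum>l\<in>?R. balanced_vec n (p l)) = - balanced_vec n (p i)"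
      using assms sum_balanced_vec_permuted[of p n] by (simp add: sum_diff1)
    then show "balanced_vec n (p i) * (\<Sum>l\<in>?R. balanced_vec n (p l)) = -1"
      using balanced_vec_square[of n "p i"] by simp
  qed simp
  also have "\<dots> = - fact n" by (simp add: card_permutations)
  finally show ?thesis using row_const \<open>n \<ge> 2\<close> by (simp add: field_simps)
qed

lemma sum_quadratic_form_two_valued:
  fixes w :: "nat \<Rightarrow> real"
  assumes "\<And>i. i < n \<Longrightarrow> C i i = d"
    and "\<And>i j. i < n \<Longrightarrow> j < n \<Longrightarrow> j \<noteq> i \<Longrightarrow> C i j = e"
  shows "(\<Sum>i<n. \<Sum>j<n. w i * w j * C i j) = (d - e) * (\<Sum>i<n. w i ^ 2) + e * (\<Sum>i<n. w i) ^ 2"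
proof -
  have "(\<Sum>j<n. w i * w j * C i j) = (d - e) * w i ^ 2 + e * w i * (\<Sum>j<n. w j)" if "i < n" for i
  proof -
    have "(\<Sum>j<n. w i * w j * C i j) = (\<Sum>j<n. e * w i * w j + (if j = i then (d - e) * w i ^ 2 else 0))"
      by (rule sum.cong) (use that assms in \<open>auto simp: power2_eq_square algebra_simps\<close>)
    also have "\<dots> = (d - e) * w i ^ 2 + e * w i * (\<Sum>j<n. w j)"
      using that by (simp add: sum.distrib sum_distrib_left)
    finally show ?thesis .
  qed
  then have "(\<Sum>i<n. \<Sum>j<n. w i * w j * C i j) = (\<Sum>i<n. (d - e) * w i ^ 2 + e * w i * (\<Sum>j<n. w j))"
    by (intro sum.cong) simp_all
  also have "\<dots> = (d - e) * (\<Sum>i<n. w i ^ 2) + e * (\<Sum>i<n. w i) ^ 2"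
    by (simp add: sum.distrib sum_distrib_left sum_distrib_right power2_eq_square mult_ac)
  finally show ?thesis .
qed

lemma perm_expect_balanced_square:
  fixes w :: "nat \<Rightarrow> real"
  assumes "even n" and "n \<ge> 2"
  shows "perm_expect n (\<lambda>p. (\<Sum>i<n. balanced_vec n (p i) * w i) ^ 2)
     = (real n * (\<Sum>i<n. w i ^ 2) - (\<Sum>i<n. w i) ^ 2) / (real n - 1)"
proof -
  let ?P = "{p. p permutes {..<n}}"
  have "(\<Sum>p\<in>?P. (\<Sum>i<n. balanced_vec n (p i) * w i) ^ 2)
      = (\<Sum>p\<in>?P. \<Sum>i<n. \<Sum>j<n. w i * w j * (balanced_vec n (p i) * balanced_vec n (p j)))"
    by (simp add: power2_eq_square sum_product algebra_simps)
  also have "\<dots> = (\<Sum>i<n. \<Sum>j<n. w i * w j * perm_correlation n i j)"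
    unfolding perm_correlation_def sum_distrib_left
    by (subst sum.swap, rule sum.cong, simp, subst sum.swap, simp)
  also have "\<dots> = (fact n + fact n / (real n - 1)) * (\<Sum>i<n. w i ^ 2)
      - fact n / (real n - 1) * (\<Sum>i<n. w i) ^ 2"
    by (subst sum_quadratic_form_two_valued[where d = "fact n" and e = "- fact n / (real n - 1)"])
      (simp_all add: perm_correlation_diag perm_correlation_offdiag assms)
  also have "\<dots> = fact n * ((real n * (\<Sum>i<n. w i ^ 2) - (\<Sum>i<n. w i) ^ 2) / (real n - 1))"
    using assms by (simp add: divide_simps) (simp add: algebra_simps)
  finally show ?thesis
    unfolding perm_expect_def by (simp add: card_permutations)
qed

lemma sum_sq_dev_expand:
  fixes w :: "nat \<Rightarrow> real"
  shows "(\<Sum>i<n. (w i - m) ^ 2) = (\<Sum>i<n. w i ^ 2) - 2 * m * (\<Sum>i<n. w i) + real n * m ^ 2"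
  by (simp add: power2_diff sum.distrib sum_subtractf sum_distrib_left sum_distrib_right algebra_simps)

lemma sum_sq_dev_from_mean:
  fixes w :: "nat \<Rightarrow> real"
  assumes "n > 0"
  shows "real n * (\<Sum>i<n. w i ^ 2) - (\<Sum>i<n. w i) ^ 2
     = real n * (\<Sum>i<n. (w i - (\<Sum>i<n. w i) / real n) ^ 2)"
  using assms sum_sq_dev_expand[of w "(\<Sum>i<n. w i) / real n" n]
  by (simp add: power2_eq_square field_simps)

lemma sum_sq_dev_mean_le:
  fixes w :: "nat \<Rightarrow> real"
  assumes "n \<ge> 2"
  shows "(\<Sum>i<n. (w i - (\<Sum>i<n. w i) / real n) ^ 2)
     \<le> (real n * (\<Sum>i<n. w i ^ 2) - (\<Sum>i<n. w i) ^ 2) / (real n - 1)"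
proof -
  define V where "V = (\<Sum>i<n. (w i - (\<Sum>i<n. w i) / real n) ^ 2)"
  have "V \<ge> 0" unfolding V_def by (simp add: sum_nonneg)
  moreover have "real n > 1" using assms by simp
  ultimately have "V \<le> real n * V / (real n - 1)" by (simp add: field_simps)
  also have "real n * V = real n * (\<Sum>i<n. w i ^ 2) - (\<Sum>i<n. w i) ^ 2"
    unfolding V_def using assms by (simp add: sum_sq_dev_from_mean)
  finally show ?thesis unfolding V_def .
qed

lemma sq_dev_pair_ge: "(a - m) ^ 2 + (b - m) ^ 2 \<ge> (a - b) ^ 2 / (2::real)"
proof -
  have "(a - m) ^ 2 + (b - m) ^ 2 - (a - b) ^ 2 / 2 = (a + b - 2 * m) ^ 2 / 2"
    by (simp add: power2_eq_square field_simps)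
  moreover have "(a + b - 2 * m) ^ 2 / 2 \<ge> 0" by simp
  ultimately show ?thesis by linarith
qed

lemma sum_sq_dev_ge_first_pair:
  fixes w :: "nat \<Rightarrow> real"
  assumes "n \<ge> 2"
  shows "(\<Sum>i<n. (w i - m) ^ 2) \<ge> (w 0 - w 1) ^ 2 / 2"
proof -
  have "(\<Sum>i\<in>{0, 1}. (w i - m) ^ 2) \<le> (\<Sum>i<n. (w i - m) ^ 2)"
    by (rule sum_mono2) (use assms in auto)
  then show ?thesis using sq_dev_pair_ge[where a = "w 0" and b = "w 1" and m = m] by simp
qed

lemma sum_sq_dev_ge_halves:
  fixes w :: "nat \<Rightarrow> real"
  shows "(\<Sum>i<2 * k. (w i - m) ^ 2) \<ge> (\<Sum>i<k. (w i - w (i + k)) ^ 2) / 2"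
proof -
  have "(\<Sum>i<2 * k. (w i - m) ^ 2) = (\<Sum>i\<in>{0..<k}. (w i - m) ^ 2) + (\<Sum>i\<in>{k..<2 * k}. (w i - m) ^ 2)"
    by (simp add: sum.atLeastLessThan_concat lessThan_atLeast0)
  also have "(\<Sum>i\<in>{k..<2 * k}. (w i - m) ^ 2) = (\<Sum>i\<in>{0..<k}. (w (i + k) - m) ^ 2)"
    using sum.shift_bounds_nat_ivl[of "\<lambda>i. (w i - m) ^ 2" 0 k k] by (simp add: mult_2)
  finally have "(\<Sum>i<2 * k. (w i - m) ^ 2) = (\<Sum>i<k. (w i - m) ^ 2 + (w (i + k) - m) ^ 2)"
    by (simp add: sum.distrib lessThan_atLeast0)
  also have "\<dots> \<ge> (\<Sum>i<k. (w i - w (i + k)) ^ 2 / 2)"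
    by (rule sum_mono) (rule sq_dev_pair_ge)
  finally show ?thesis by (simp add: sum_divide_distrib)
qed

lemma sum_sq_diff_power_halves:
  fixes x :: real
  shows "(\<Sum>i<k. (x ^ i - x ^ (i + k)) ^ 2) = (1 - x ^ k) ^ 2 * (\<Sum>i<k. (x ^ 2) ^ i)"
proof -
  have "(x ^ i - x ^ (i + k)) ^ 2 = (1 - x ^ k) ^ 2 * (x ^ 2) ^ i" for i
    by (simp add: power_add power2_eq_square power_mult_distrib algebra_simps flip: power_mult)
  then show ?thesis by (simp add: sum_distrib_left)
qed

lemma geometric_sum_squares_ge:
  fixes \<alpha> :: real
  assumes "0 < \<alpha>" "\<alpha> \<le> 1"
  shows "(1 - (1 - \<alpha>) ^ k) / (2 * \<alpha>) \<le> (\<Sum>i<k. ((1 - \<alpha>) ^ 2) ^ i)"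
proof -
  define x where "x = 1 - \<alpha>"
  define G where "G = (\<Sum>i<k. (x ^ 2) ^ i)"
  have "0 \<le> x ^ k" "x ^ k \<le> 1"
    using assms by (simp_all add: x_def power_le_one)
  then have "1 - x ^ k \<le> 1 - (x ^ k) ^ 2"
    by (simp add: power2_eq_square mult_left_le_one_le)
  also have "\<dots> = (1 - x ^ 2) * G"
    unfolding G_def using power_diff_1_eq[of "x ^ 2" k]
    by (simp add: algebra_simps flip: power_mult)
  also have "\<dots> \<le> (2 * \<alpha>) * G"
  proof (rule mult_right_mono)
    show "1 - x ^ 2 \<le> 2 * \<alpha>" using assms by (simp add: x_def power2_eq_square algebra_simps)
    show "0 \<le> G" unfolding G_def by (simp add: sum_nonneg)
  qed
  finally show ?thesis
    using assms unfolding G_def x_def by (simp add: field_simps)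
qed

text \<open>Bernoulli's inequality applied to \<open>(1 + \<alpha>)^k\<close>, using \<open>(1 - \<alpha>)(1 + \<alpha>) \<le> 1\<close>.\<close>
lemma power_one_minus_mult_le:
  fixes \<alpha> :: real
  assumes "0 \<le> \<alpha>" "\<alpha> \<le> 1"
  shows "(1 - \<alpha>) ^ k * (1 + real k * \<alpha>) \<le> 1"
proof -
  have "(1 - \<alpha>) ^ k * (1 + real k * \<alpha>) \<le> (1 - \<alpha>) ^ k * (1 + \<alpha>) ^ k"
    using assms by (intro mult_left_mono Bernoulli_inequality) simp_all
  also have "\<dots> = (1 - \<alpha> ^ 2) ^ k"
    by (simp add: power_mult_distrib[symmetric] power2_eq_square algebra_simps)
  also have "\<dots> \<le> 1"
    using assms by (intro power_le_one) (simp_all add: power2_eq_square mult_le_one)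
  finally show ?thesis .
qed

lemma sum_sq_dev_geometric_ge:
  fixes \<alpha> :: real
  assumes "0 < \<alpha>" "\<alpha> \<le> 1"
  shows "(1 - (1 - \<alpha>) ^ k) ^ 3 / (4 * \<alpha>) \<le> (\<Sum>i<2 * k. ((1 - \<alpha>) ^ i - m) ^ 2)"
proof -
  define q where "q = 1 - (1 - \<alpha>) ^ k"
  have "q \<ge> 0" using assms by (simp add: q_def power_le_one)
  have "(\<Sum>i<2 * k. ((1 - \<alpha>) ^ i - m) ^ 2) \<ge> q ^ 2 * (\<Sum>i<k. ((1 - \<alpha>) ^ 2) ^ i) / 2"
    using sum_sq_dev_ge_halves[of "\<lambda>i. (1 - \<alpha>) ^ i" k m]
    by (simp add: sum_sq_diff_power_halves q_def)
  moreover have "q ^ 2 * (\<Sum>i<k. ((1 - \<alpha>) ^ 2) ^ i) \<ge> q ^ 2 * (q / (2 * \<alpha>))"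
    using geometric_sum_squares_ge[OF assms, of k] by (intro mult_left_mono) (simp_all add: q_def)
  ultimately show ?thesis
    by (simp add: q_def power2_eq_square power3_eq_cube field_simps)
qed

lemma sum_sq_dev_geometric_lower_bound:
  fixes \<alpha> :: real
  assumes "even n" "n \<ge> 2" "\<alpha> > 0"
  shows "1 / 256 * min (1 + 1 / \<alpha>) (real n ^ 3 * \<alpha> ^ 2) \<le> (\<Sum>i<n. ((1 - \<alpha>) ^ i - m) ^ 2)"
    (is "_ \<le> ?V")
proof (cases "\<alpha> \<ge> 1")
  case True
  have "1 / 256 * min (1 + 1 / \<alpha>) (real n ^ 3 * \<alpha> ^ 2) \<le> 1 / 256 * (1 + 1 / \<alpha>)"
    by simp
  also have "\<dots> \<le> 1 / 256 * 2"
    using True by (simp add: divide_le_eq)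
  also have "\<dots> \<le> \<alpha> ^ 2 / 2"
    using one_le_power[OF True, of 2] by linarith
  also have "\<dots> \<le> ?V"
    using sum_sq_dev_ge_first_pair[OF assms(2), of "\<lambda>i. (1 - \<alpha>) ^ i" m] by simp
  finally show ?thesis .
next
  case False
  obtain k where n: "n = 2 * k" using assms(1) by blast
  define q where "q = 1 - (1 - \<alpha>) ^ k"
  have "0 \<le> q" using assms False by (simp add: q_def power_le_one)
  have V: "q ^ 3 / (4 * \<alpha>) \<le> ?V"
    unfolding n q_def using assms False by (intro sum_sq_dev_geometric_ge) simp_all
  have q_ge: "real k * \<alpha> \<le> q * (1 + real k * \<alpha>)"
    using power_one_minus_mult_le[of \<alpha> k] assms False by (simp add: q_def algebra_simps)
  show ?thesis
  proof (cases "real k * \<alpha> \<ge> 1")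
    case True
    have "0 \<le> (q * 2 - 1) * (1 + real k * \<alpha>)"
      using q_ge True by (simp add: algebra_simps)
    then have "1 / 2 \<le> q"
      using True by (simp add: zero_le_mult_iff)
    have "1 + 1 / \<alpha> \<le> 2 / \<alpha>"
      using \<open>\<not> 1 \<le> \<alpha>\<close> assms(3) by (simp add: field_simps)
    then have "1 / 256 * min (1 + 1 / \<alpha>) (real n ^ 3 * \<alpha> ^ 2) \<le> 1 / 256 * (2 / \<alpha>)"
      by (intro mult_left_mono min.coboundedI1) simp_all
    also have "\<dots> \<le> (1 / 2) ^ 3 / (4 * \<alpha>)"
      using assms(3) by (simp add: field_simps)
    also have "\<dots> \<le> q ^ 3 / (4 * \<alpha>)"
      using \<open>1 / 2 \<le> q\<close> assms(3) by (intro divide_right_mono power_mono) simp_all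
    also have "\<dots> \<le> ?V" by (fact V)
    finally show ?thesis .
  next
    case False
    have "q * (1 + real k * \<alpha>) \<le> q * 2"
      using False \<open>0 \<le> q\<close> by (intro mult_left_mono) simp_all
    then have "real k * \<alpha> / 2 \<le> q"
      using q_ge by simp
    have "1 / 256 * min (1 + 1 / \<alpha>) (real n ^ 3 * \<alpha> ^ 2) \<le> 1 / 256 * (real n ^ 3 * \<alpha> ^ 2)"
      by (intro mult_left_mono) simp_all
    also have "\<dots> = (real k * \<alpha> / 2) ^ 3 / (4 * \<alpha>)"
      using assms(3) n by (simp add: power3_eq_cube power2_eq_square field_simps)
    also have "\<dots> \<le> q ^ 3 / (4 * \<alpha>)"
      using \<open>real k * \<alpha> / 2 \<le> q\<close> assms(3) by (intro divide_right_mono power_mono) simp_all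
    also have "\<dots> \<le> ?V" by (fact V)
    finally show ?thesis .
  qed
qed

theorem lemma1:
  shows "\<exists>c::real. c > 0 \<and>
    (\<forall>(n::nat) (\<alpha>::real). even n \<and> n \<ge> 2 \<and> \<alpha> > 0 \<longrightarrow>
       perm_expect n (\<lambda>p. (\<Sum>i<n. balanced_vec n (p i) * (1 - \<alpha>) ^ i) ^ 2)
         \<ge> c * min (1 + 1 / \<alpha>) (real n ^ 3 * \<alpha> ^ 2))"
proof (intro exI[of _ "1 / 256"] conjI allI impI)
  fix n :: nat and \<alpha> :: real
  assume "even n \<and> n \<ge> 2 \<and> \<alpha> > 0"
  then have n: "even n" "n \<ge> 2" and "\<alpha> > 0" by auto
  let ?w = "\<lambda>i. (1 - \<alpha>) ^ i"
  have "1 / 256 * min (1 + 1 / \<alpha>) (real n ^ 3 * \<alpha> ^ 2) \<le> (\<Sum>i<n. (?w i - (\<Sum>i<n. ?w i) / real n) ^ 2)"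
    using n \<open>\<alpha> > 0\<close> by (rule sum_sq_dev_geometric_lower_bound)
  also have "\<dots> \<le> (real n * (\<Sum>i<n. ?w i ^ 2) - (\<Sum>i<n. ?w i) ^ 2) / (real n - 1)"
    using n(2) by (rule sum_sq_dev_mean_le)
  also have "\<dots> = perm_expect n (\<lambda>p. (\<Sum>i<n. balanced_vec n (p i) * ?w i) ^ 2)"
    using n by (rule perm_expect_balanced_square[symmetric])
  finally show "perm_expect n (\<lambda>p. (\<Sum>i<n. balanced_vec n (p i) * ?w i) ^ 2)
      \<ge> 1 / 256 * min (1 + 1 / \<alpha>) (real n ^ 3 * \<alpha> ^ 2)" .
qed simp

end
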